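(* An irreducible plane algebraic curve of degree $d$ has at most $4d$ symmetries, unless it is a line or a circle.
   Context: A plane algebraic curve is an infinite set $Z_{\mathbb{R}}(f)=\{(a,b)\in\mathbb{R}^2: f(a,b)=0\}$ for some nonzero $f\in\mathbb{R}[x,y]$; its degree is the minimum degree of such an $f$; it is irreducible if $f$ can be chosen irreducible over $\mathbb{R}$. A symmetry of a curve $C$ is an isometry $T$ of $\mathbb{R}^2$ with $T(C)=C$. *)

theory Defs
  imports "HOL-Analysis.Analysis" "HOL-Computational_Algebra.Polynomial_Factorial"
begin

text \<open>Bivariate real polynomials are represented as elements of R[x][y],
  i.e. polynomials in y whose coefficients are polynomials in x.\<close>

type_synonym bipoly = "real poly poly"

definition eval2 :: "bipoly \<Rightarrow> real \<Rightarrow> real \<Rightarrow> real" where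
  "eval2 f a b = poly (map_poly (\<lambda>c. poly c a) f) b"

definition total_degree :: "bipoly \<Rightarrow> nat" where
  "total_degree f = Max ({i + degree (coeff f i) | i. i \<le> degree f \<and> coeff f i \<noteq> 0} \<union> {0})"

definition zero_set :: "bipoly \<Rightarrow> (real \<times> real) set" where
  "zero_set f = {(a, b). eval2 f a b = 0}"

definition plane_curve :: "(real \<times> real) set \<Rightarrow> bool" where
  "plane_curve C \<longleftrightarrow> infinite C \<and> (\<exists>f. f \<noteq> 0 \<and> C = zero_set f)"

definition curve_degree :: "(real \<times> real) set \<Rightarrow> nat" where
  "curve_degree C = (LEAST d. \<exists>f. f \<noteq> 0 \<and> zero_set f = C \<and> total_degree f = d)"

definition irreducible_curve :: "(real \<times> real) set \<Rightarrow> bool" where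
  "irreducible_curve C \<longleftrightarrow> plane_curve C \<and> (\<exists>f. irreducible f \<and> zero_set f = C)"

definition isometry :: "(real \<times> real \<Rightarrow> real \<times> real) \<Rightarrow> bool" where
  "isometry T \<longleftrightarrow> (\<forall>p q. dist (T p) (T q) = dist p q)"

definition symmetries :: "(real \<times> real) set \<Rightarrow> (real \<times> real \<Rightarrow> real \<times> real) set" where
  "symmetries C = {T. isometry T \<and> T ` C = C}"

definition is_line :: "(real \<times> real) set \<Rightarrow> bool" where
  "is_line C \<longleftrightarrow> (\<exists>a b c. (a, b) \<noteq> (0, 0) \<and> C = {(x, y). a * x + b * y = c})"

definition is_circle :: "(real \<times> real) set \<Rightarrow> bool" where
  "is_circle C \<longleftrightarrow> (\<exists>x0 y0 r. r > 0 \<and> C = {(x, y). (x - x0)^2 + (y - y0)^2 = r^2})"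

end

theory Submission
  imports Defs
begin

text \<open>Every isometry of the plane is a proper motion \<open>x \<mapsto> R x + t\<close> with \<open>R\<close> a rotation, or an
  improper one. If a translation by \<open>v \<noteq> 0\<close> maps the curve to itself, the curve contains infinitely
  many points of a line in direction \<open>v\<close>; dividing its irreducible equation by the equation of
  that line leaves a remainder vanishing at infinitely many points, so the curve is the line.
  Hence the commutators of proper symmetries, being translations, are trivial: the proper
  symmetries commute, and if one of them is not the identity they all fix its unique fixed point
  \<open>c\<close>. They are then determined by the image of a single point \<open>p \<noteq> c\<close> of the curve, which lies
  on the circle through \<open>p\<close> about \<open>c\<close>.

  A curve of degree \<open>d\<close> other than this circle meets it in at most \<open>2 d\<close> points: restricting
  the equation to a rational parametrization of the circle and clearing denominators gives a
  polynomial of degree at most \<open>2 d\<close>, which vanishes identically if it has more roots; then the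
  curve contains the circle minus one point, and an irreducible such curve is the circle, again by
  division with remainder. So there are at most \<open>2 d\<close> proper symmetries, and composition with
  one improper symmetry maps the improper ones injectively to proper ones.\<close>

section \<open>Irreducible curves through pieces of lines and circles\<close>

lemma eval2_eq_poly_poly: "eval2 f a b = poly (poly f [:b:]) a"
  unfolding eval2_def by (induction f) (simp_all add: map_poly_pCons)

lemma eval2_0 [simp]: "eval2 0 a b = 0"
  and eval2_const [simp]: "eval2 [:[:k:]:] a b = k"
  and eval2_add [simp]: "eval2 (p + q) a b = eval2 p a b + eval2 q a b"
  and eval2_smult [simp]: "eval2 (smult c p) a b = poly c a * eval2 p a b"
  and eval2_mult [simp]: "eval2 (p * q) a b = eval2 p a b * eval2 q a b"
  and eval2_pCons: "eval2 (pCons c p) a b = poly c a + b * eval2 p a b"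
  by (simp_all add: eval2_eq_poly_poly)

definition circle :: "real \<Rightarrow> real \<Rightarrow> real \<Rightarrow> (real \<times> real) set" where
  "circle x0 y0 r = {(x, y). (x - x0)^2 + (y - y0)^2 = r^2}"

lemma is_circle_iff: "is_circle C \<longleftrightarrow> (\<exists>x0 y0 r. r > 0 \<and> C = circle x0 y0 r)"
  by (simp add: is_circle_def circle_def)

lemma zero_set_irreducible_eq_factor:
  fixes f Q q :: bipoly
  assumes "irreducible f" "f = Q * q" "\<not> is_unit Q"
  shows "zero_set f = zero_set Q"
proof -
  have "is_unit q" using irreducibleD[OF assms(1,2)] assms(3) by blast
  then obtain k where "k \<noteq> 0" "q = [:[:k:]:]" by (auto simp: is_unit_poly_iff dvd_field_iff)
  then show ?thesis using assms(2) by (auto simp: zero_set_def)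
qed

lemma monic_division:
  fixes f Q :: "'a::comm_ring_1 poly"
  assumes "lead_coeff Q = 1"
  obtains q r where "f = Q * q + r" "r = 0 \<or> degree r < degree Q"
proof -
  have "Q \<noteq> 0" using assms by auto
  obtain q r where qr: "pseudo_divmod f Q = (q, r)" by (metis surj_pair)
  from pseudo_divmod[OF \<open>Q \<noteq> 0\<close> qr] assms show ?thesis using that by simp
qed

lemma poly_eq_0_if_infinite_roots:
  fixes p :: "'a::idom poly"
  assumes "infinite A" "\<And>x. x \<in> A \<Longrightarrow> poly p x = 0"
  shows "p = 0"
  using assms poly_roots_finite finite_subset[of A "{x. poly p x = 0}"] by blast

lemma irreducible_zero_set_eq_line:
  fixes f :: bipoly
  assumes irr: "irreducible f" and ab: "(\<alpha>, \<beta>) \<noteq> (0, 0)"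
    and S: "S \<subseteq> zero_set f" "S \<subseteq> {(x, y). \<alpha> * x + \<beta> * y = \<gamma>}" "infinite S"
  shows "zero_set f = {(x, y). \<alpha> * x + \<beta> * y = \<gamma>}"
proof (cases "\<beta> = 0")
  case False
  define Q :: bipoly where "Q = [:[:-\<gamma>/\<beta>, \<alpha>/\<beta>:], 1:]"
  have Q: "lead_coeff Q = 1" "degree Q = 1" by (auto simp: Q_def)
  have zero_set_Q: "zero_set Q = {(x, y). \<alpha> * x + \<beta> * y = \<gamma>}"
    using False by (auto simp: Q_def zero_set_def eval2_pCons field_simps)
  obtain q r where qr: "f = Q * q + r" "r = 0 \<or> degree r < degree Q"
    using monic_division[OF Q(1)] by blast
  have "degree r = 0" using qr(2) Q(2) by auto
  then have r: "r = [:coeff r 0:]" by (metis degree_eq_zeroE coeff_pCons_0)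
  have on_line: "\<alpha> * fst p + \<beta> * snd p = \<gamma>" if "p \<in> S" for p
    using S(2) that by (auto simp: case_prod_beta)
  have "inj_on fst S"
  proof (rule inj_onI)
    fix p p' assume "p \<in> S" "p' \<in> S" "fst p = fst p'"
    then have "\<beta> * snd p = \<beta> * snd p'" using on_line[of p] on_line[of p'] by (metis add_left_cancel)
    then show "p = p'" using False \<open>fst p = fst p'\<close> by (simp add: prod_eq_iff)
  qed
  then have "infinite (fst ` S)" using S(3) finite_imageD by blast
  moreover have "poly (coeff r 0) x = 0" if x: "x \<in> fst ` S" for x
  proof -
    obtain y where "(x, y) \<in> S" using x by force
    then have "eval2 f x y = 0" "eval2 Q x y = 0" using S zero_set_Q by (auto simp: zero_set_def)
    then have "eval2 r x y = 0" using qr(1) by simp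
    then show ?thesis by (subst (asm) r) (simp add: eval2_pCons)
  qed
  ultimately have "coeff r 0 = 0" by (rule poly_eq_0_if_infinite_roots)
  then have "f = Q * q" using qr(1) r by simp
  moreover have "\<not> is_unit Q" using Q by (auto simp: is_unit_poly_iff)
  ultimately have "zero_set f = zero_set Q" by (rule zero_set_irreducible_eq_factor[OF irr])
  with zero_set_Q show ?thesis by simp
next
  case True
  then have "\<alpha> \<noteq> 0" using ab by auto
  define k where "k = \<gamma> / \<alpha>"
  have Sk: "fst p = k" if "p \<in> S" for p using S(2) True \<open>\<alpha> \<noteq> 0\<close> that by (auto simp: k_def field_simps)
  have "inj_on snd S" using Sk by (intro inj_onI) (metis prod.collapse)
  then have "infinite (snd ` S)" using S(3) finite_imageD by blast
  moreover have "poly (map_poly (\<lambda>c. poly c k) f) y = 0" if y: "y \<in> snd ` S" for y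
  proof -
    obtain x where "(x, y) \<in> S" using y by force
    then show ?thesis using S(1) Sk by (force simp: zero_set_def eval2_def)
  qed
  ultimately have "map_poly (\<lambda>c. poly c k) f = 0" by (rule poly_eq_0_if_infinite_roots)
  then have "poly (coeff f i) k = 0" for i by (metis coeff_0 coeff_map_poly poly_0)
  then have "[:[:-k, 1:]:] dvd f" by (simp add: const_poly_dvd_iff poly_eq_0_iff_dvd)
  then obtain q where "f = [:[:-k, 1:]:] * q" by blast
  moreover have "\<not> is_unit [:[:-k, 1:]:]" by (auto simp: is_unit_poly_iff)
  ultimately have "zero_set f = zero_set [:[:-k, 1:]:]" by (rule zero_set_irreducible_eq_factor[OF irr])
  also have "\<dots> = {(x, y). \<alpha> * x + \<beta> * y = \<gamma>}"
    using True \<open>\<alpha> \<noteq> 0\<close> by (auto simp: zero_set_def eval2_pCons k_def field_simps)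
  finally show ?thesis .
qed

lemma irreducible_zero_set_eq_circle:
  fixes f :: bipoly
  assumes irr: "irreducible f" and r: "r > 0" and sub: "circle x0 y0 r - {z} \<subseteq> zero_set f"
  shows "zero_set f = circle x0 y0 r"
proof -
  define Q :: bipoly where "Q = [:[:x0^2 + y0^2 - r^2, -2*x0, 1:], [:-2*y0:], 1:]"
  have Q: "lead_coeff Q = 1" "degree Q = 2" by (auto simp: Q_def)
  have zero_set_Q: "zero_set Q = circle x0 y0 r"
    by (auto simp: Q_def zero_set_def circle_def eval2_pCons power2_eq_square algebra_simps)
  obtain q rm where qr: "f = Q * q + rm" "rm = 0 \<or> degree rm < degree Q"
    using monic_division[OF Q(1)] by blast
  define a0 a1 where "a0 = coeff rm 0" and "a1 = coeff rm 1"
  have rm: "rm = [:a0, a1:]"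
    by (rule poly_eqI) (use qr(2) Q(2) in \<open>auto simp: a0_def a1_def coeff_pCons split: nat.splits intro!: coeff_eq_0\<close>)
  have rm_root: "poly a0 x + y * poly a1 x = 0" if "(x, y) \<in> circle x0 y0 r - {z}" for x y
  proof -
    have "eval2 f x y = 0" "eval2 Q x y = 0" using sub that zero_set_Q by (auto simp: zero_set_def)
    then show ?thesis using qr(1) by (simp add: rm eval2_pCons)
  qed
  define I where "I = {x0 - r<..<x0 + r} - {fst z}"
  have "infinite I" unfolding I_def using r by simp
  text \<open>Over each \<open>x \<in> I\<close> the circle has the two points \<open>y0 \<plusminus> s\<close>, \<open>s > 0\<close>, neither equal to \<open>z\<close>.\<close>
  have two_roots: "poly a0 x + (y0 + s) * poly a1 x = 0 \<and> poly a0 x + (y0 - s) * poly a1 x = 0 \<and> s > 0"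
    if "x \<in> I" and s: "s = sqrt (r^2 - (x - x0)^2)" for x s
  proof -
    have "\<bar>x - x0\<bar> < r" using that by (auto simp: I_def)
    then have "(x - x0)^2 < r^2" using power_strict_mono[of "\<bar>x - x0\<bar>" r 2] by simp
    then have "s > 0" "s^2 = r^2 - (x - x0)^2" using s by auto
    moreover have "fst z \<noteq> x" using that by (auto simp: I_def)
    ultimately show ?thesis by (auto intro!: rm_root simp: circle_def)
  qed
  have "poly a1 x = 0" if "x \<in> I" for x
  proof -
    define s where "s = sqrt (r^2 - (x - x0)^2)"
    from two_roots[OF that s_def] have "2 * s * poly a1 x = 0" "s > 0" by argo+
    then show ?thesis by simp
  qed
  then have "a1 = 0" using \<open>infinite I\<close> poly_eq_0_if_infinite_roots by blast
  moreover have "poly a0 x = 0" if "x \<in> I" for x using two_roots[OF that refl] \<open>a1 = 0\<close> by simp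
  then have "a0 = 0" using \<open>infinite I\<close> poly_eq_0_if_infinite_roots by blast
  ultimately have "f = Q * q" using qr(1) rm by simp
  moreover have "\<not> is_unit Q" using Q by (auto simp: is_unit_poly_iff)
  ultimately have "zero_set f = zero_set Q" by (rule zero_set_irreducible_eq_factor[OF irr])
  with zero_set_Q show ?thesis by simp
qed

section \<open>Intersection with a circle\<close>

lemma total_degree_ge: "coeff f i \<noteq> 0 \<Longrightarrow> i + degree (coeff f i) \<le> total_degree f"
  unfolding total_degree_def by (rule Max_ge) (auto intro: le_degree simp: finite_image_set2)

lemma total_degree_le: "(\<And>i. coeff f i \<noteq> 0 \<Longrightarrow> i + degree (coeff f i) \<le> n) \<Longrightarrow> total_degree f \<le> n"
  unfolding total_degree_def by (rule Max.boundedI) (auto simp: finite_image_set2)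

lemma degree_le_total_degree_pCons: "degree c \<le> total_degree (pCons c p)"
  using total_degree_ge[of "pCons c p" 0] by (cases "c = 0") auto

lemma total_degree_pCons:
  assumes "p \<noteq> 0"
  shows "total_degree p + 1 \<le> total_degree (pCons c p)"
proof -
  obtain i where "coeff p i \<noteq> 0" using assms by (metis leading_coeff_0_iff)
  then have "1 \<le> total_degree (pCons c p)" using total_degree_ge[of "pCons c p" "Suc i"] by simp
  moreover have "total_degree p \<le> total_degree (pCons c p) - 1"
    using total_degree_ge[of "pCons c p" "Suc _"] by (intro total_degree_le) fastforce
  ultimately show ?thesis by simp
qed

lemma poly_rational_substitution:
  fixes c X D :: "'a::field poly"
  assumes X: "degree X \<le> k" and D: "degree D \<le> k" and c: "degree c \<le> d"
  shows "\<exists>h. degree h \<le> k * d \<and>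
    (\<forall>t. poly D t \<noteq> 0 \<longrightarrow> poly h t = poly D t ^ d * poly c (poly X t / poly D t))"
  using c
proof (induction c arbitrary: d)
  case 0
  then show ?case by (intro exI[of _ 0]) auto
next
  case (pCons a c)
  have degree_D_power: "degree (D ^ n) \<le> k * n" for n
    using degree_power_le[of D n] D by (metis le_trans mult.commute mult_le_mono1)
  show ?case
  proof (cases "c = 0")
    case True
    then show ?thesis
      using degree_D_power[of d] by (intro exI[of _ "smult a (D ^ d)"]) (auto intro: le_trans[OF degree_smult_le])
  next
    case False
    then obtain d' where d: "d = Suc d'" "degree c \<le> d'" using pCons.prems by (cases d) auto
    obtain h where h: "degree h \<le> k * d'"
      "\<And>t. poly D t \<noteq> 0 \<Longrightarrow> poly h t = poly D t ^ d' * poly c (poly X t / poly D t)"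
      using pCons.IH[OF d(2)] by blast
    have "degree (smult a (D ^ d) + X * h) \<le> k * d"
    proof (rule degree_add_le)
      show "degree (smult a (D ^ d)) \<le> k * d" using degree_D_power[of d] le_trans[OF degree_smult_le] by blast
      show "degree (X * h) \<le> k * d" using degree_mult_le[of X h] X h(1) d(1) by simp
    qed
    moreover have "poly (smult a (D ^ d) + X * h) t = poly D t ^ d * poly (pCons a c) (poly X t / poly D t)"
      if "poly D t \<noteq> 0" for t
      using that by (simp add: h(2) d(1) algebra_simps)
    ultimately show ?thesis by blast
  qed
qed

lemma eval2_rational_substitution:
  fixes f :: bipoly and X Y D :: "real poly"
  assumes X: "degree X \<le> k" and Y: "degree Y \<le> k" and D: "degree D \<le> k" and f: "total_degree f \<le> d"
  shows "\<exists>g. degree g \<le> k * d \<and> (\<forall>t. poly D t \<noteq> 0 \<longrightarrow>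
    poly g t = poly D t ^ d * eval2 f (poly X t / poly D t) (poly Y t / poly D t))"
  using f
proof (induction f arbitrary: d)
  case 0
  then show ?case by (intro exI[of _ 0]) auto
next
  case (pCons c p)
  have "degree c \<le> d" using degree_le_total_degree_pCons[of c p] pCons.prems by linarith
  then obtain h where h: "degree h \<le> k * d"
    "\<And>t. poly D t \<noteq> 0 \<Longrightarrow> poly h t = poly D t ^ d * poly c (poly X t / poly D t)"
    using poly_rational_substitution[OF X D] by blast
  show ?case
  proof (cases "p = 0")
    case True
    then show ?thesis using h by (intro exI[of _ h]) (auto simp: eval2_pCons)
  next
    case False
    then obtain d' where d: "d = Suc d'" "total_degree p \<le> d'"
      using total_degree_pCons[OF False, of c] pCons.prems by (cases d) auto
    obtain g where g: "degree g \<le> k * d'" "\<And>t. poly D t \<noteq> 0 \<Longrightarrow>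
        poly g t = poly D t ^ d' * eval2 p (poly X t / poly D t) (poly Y t / poly D t)"
      using pCons.IH[OF d(2)] by blast
    have "degree (h + Y * g) \<le> k * d"
      using h(1) degree_mult_le[of Y g] Y g(1) d(1) by (intro degree_add_le) simp_all
    moreover have "poly (h + Y * g) t =
        poly D t ^ d * eval2 (pCons c p) (poly X t / poly D t) (poly Y t / poly D t)"
      if "poly D t \<noteq> 0" for t
      using that by (simp add: h(2) g(2) d(1) eval2_pCons algebra_simps)
    ultimately show ?thesis by blast
  qed
qed

definition rat_cos :: "real \<Rightarrow> real" where "rat_cos t = (1 - t^2) / (1 + t^2)"
definition rat_sin :: "real \<Rightarrow> real" where "rat_sin t = 2 * t / (1 + t^2)"

lemma rat_cos_sq_plus_rat_sin_sq: "rat_cos t ^ 2 + rat_sin t ^ 2 = 1"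
proof -
  have "1 + t^2 > 0" by (simp add: add_pos_nonneg)
  moreover have "(1 - t^2)^2 + (2*t)^2 = (1 + t^2)^2" by algebra
  ultimately show ?thesis by (simp add: rat_cos_def rat_sin_def power_divide divide_simps)
qed

lemma rat_sin_div_rat_cos: "rat_sin t / (1 + rat_cos t) = t"
proof -
  have "1 + t^2 > 0" by (simp add: add_pos_nonneg)
  then show ?thesis by (simp add: rat_cos_def rat_sin_def field_simps)
qed

lemma rat_cos_rat_sin_of_unit:
  assumes "X^2 + Y^2 = 1" "X \<noteq> -1"
  shows "rat_cos (Y / (1 + X)) = X" "rat_sin (Y / (1 + X)) = Y"
proof -
  have X: "1 + X \<noteq> 0" using assms(2) by linarith
  have "(1 + X)^2 + Y^2 = 2 * (1 + X)" using assms(1) by (simp add: power2_eq_square algebra_simps)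
  then have denom: "1 + (Y / (1 + X))^2 = 2 / (1 + X)"
    using X by (simp add: power_divide divide_simps) (simp add: power2_eq_square algebra_simps)
  have "1 - (Y / (1 + X))^2 = 2 - 2 / (1 + X)" using denom by simp
  then show "rat_cos (Y / (1 + X)) = X"
    unfolding rat_cos_def denom using X by (simp add: divide_simps)
  show "rat_sin (Y / (1 + X)) = Y"
    unfolding rat_sin_def denom using X by simp
qed

lemma degree_quadratic_le: "degree [:a, b, c:] \<le> 2"
  by simp

text \<open>For a unit vector \<open>(u1, u2)\<close>, \<open>circle_param\<close> rotates the rational parametrization
  \<open>(rat_cos, rat_sin)\<close> of the unit circle by \<open>(u1, u2)\<close> and scales it onto \<open>circle x0 y0 r\<close>;
  it misses exactly the point \<open>(x0 - r * u1, y0 - r * u2)\<close>, and \<open>circle_param_inv\<close> inverts it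
  on the rest of the circle.\<close>

definition circle_param :: "real \<Rightarrow> real \<Rightarrow> real \<Rightarrow> real \<Rightarrow> real \<Rightarrow> real \<Rightarrow> real \<times> real" where
  "circle_param x0 y0 r u1 u2 t =
    (x0 + r * (u1 * rat_cos t - u2 * rat_sin t), y0 + r * (u2 * rat_cos t + u1 * rat_sin t))"

definition circle_param_inv :: "real \<Rightarrow> real \<Rightarrow> real \<Rightarrow> real \<Rightarrow> real \<Rightarrow> real \<times> real \<Rightarrow> real" where
  "circle_param_inv x0 y0 r u1 u2 p =
    (let a = (fst p - x0) / r; b = (snd p - y0) / r in (u1 * b - u2 * a) / (1 + (u1 * a + u2 * b)))"

lemma circle_param_circle_param_inv:
  assumes u: "u1^2 + u2^2 = 1" and r: "r > 0"
    and p: "p \<in> circle x0 y0 r" "p \<noteq> (x0 - r * u1, y0 - r * u2)"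
  shows "circle_param x0 y0 r u1 u2 (circle_param_inv x0 y0 r u1 u2 p) = p"
proof -
  define a b where "a = (fst p - x0) / r" and "b = (snd p - y0) / r"
  have ab: "a^2 + b^2 = 1"
    using p(1) r by (auto simp: a_def b_def circle_def power_divide add_divide_distrib[symmetric])
  define X Y where "X = u1 * a + u2 * b" and "Y = u1 * b - u2 * a"
  have rotate_back: "u1 * X - u2 * Y = a" "u2 * X + u1 * Y = b"
    using u unfolding X_def Y_def by (simp_all add: power2_eq_square algebra_simps) algebra+
  have XY: "X^2 + Y^2 = 1"
  proof -
    have "X^2 + Y^2 = (u1^2 + u2^2) * (a^2 + b^2)"
      unfolding X_def Y_def by (simp add: power2_eq_square algebra_simps)
    then show ?thesis using u ab by simp
  qed
  have "X \<noteq> -1"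
  proof
    assume "X = -1"
    then have "a = - u1" "b = - u2" using XY rotate_back by auto
    then have "p = (x0 - r * u1, y0 - r * u2)" using r by (auto simp: a_def b_def field_simps prod_eq_iff)
    then show False using p(2) by simp
  qed
  have "circle_param_inv x0 y0 r u1 u2 p = Y / (1 + X)"
    by (simp add: circle_param_inv_def Let_def a_def[symmetric] b_def[symmetric] X_def Y_def)
  then show ?thesis
    using rotate_back r rat_cos_rat_sin_of_unit[OF XY \<open>X \<noteq> -1\<close>]
    by (simp add: circle_param_def a_def b_def prod_eq_iff)
qed

lemma circle_param_rational:
  defines "D \<equiv> [:1, 0, 1:]"
  shows "fst (circle_param x0 y0 r u1 u2 t) = poly [:x0 + r*u1, -2*r*u2, x0 - r*u1:] t / poly D t"
    and "snd (circle_param x0 y0 r u1 u2 t) = poly [:y0 + r*u2, 2*r*u1, y0 - r*u2:] t / poly D t"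
proof -
  have "1 + t^2 > 0" by (simp add: add_pos_nonneg)
  then have D: "poly D t = 1 + t^2" "1 + t^2 \<noteq> 0" by (simp_all add: D_def power2_eq_square)
  have "rat_cos t = (1 - t^2) / (1 + t^2)" "rat_sin t = 2 * t / (1 + t^2)"
    by (simp_all add: rat_cos_def rat_sin_def)
  then show "fst (circle_param x0 y0 r u1 u2 t) = poly [:x0 + r*u1, -2*r*u2, x0 - r*u1:] t / poly D t"
    and "snd (circle_param x0 y0 r u1 u2 t) = poly [:y0 + r*u2, 2*r*u1, y0 - r*u2:] t / poly D t"
    unfolding D(1) using D(2) by (simp_all add: circle_param_def field_simps power2_eq_square) algebra+
qed

lemma circle_minus_point_subset_zero_set:
  fixes f :: bipoly
  assumes r: "r > 0" and f: "total_degree f \<le> d"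
    and S: "finite S" "2 * d < card S" "S \<subseteq> zero_set f \<inter> circle x0 y0 r"
  shows "\<exists>z. circle x0 y0 r - {z} \<subseteq> zero_set f"
proof -
  text \<open>Choose the point missed by the parametrization outside the finite set \<open>S\<close>.\<close>
  define antipode where "antipode t = (x0 - r * rat_cos t, y0 - r * rat_sin t)" for t
  have "inj antipode"
  proof
    fix s t assume "antipode s = antipode t"
    then have "rat_sin s / (1 + rat_cos s) = rat_sin t / (1 + rat_cos t)" using r by (simp add: antipode_def)
    then show "s = t" by (simp only: rat_sin_div_rat_cos)
  qed
  then have "\<not> range antipode \<subseteq> S" using S(1) finite_subset finite_imageD infinite_UNIV_char_0 by blast
  then obtain t0 where t0: "antipode t0 \<notin> S" by blast
  define u1 u2 where "u1 = rat_cos t0" and "u2 = rat_sin t0"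
  have u: "u1^2 + u2^2 = 1" by (simp add: u1_def u2_def rat_cos_sq_plus_rat_sin_sq)
  let ?P = "circle_param x0 y0 r u1 u2" and ?Q = "circle_param_inv x0 y0 r u1 u2"
  have P_Q: "?P (?Q p) = p" if "p \<in> circle x0 y0 r - {antipode t0}" for p
    using circle_param_circle_param_inv[OF u r] that by (simp add: antipode_def u1_def u2_def)
  define D :: "real poly" where "D = [:1, 0, 1:]"
  have D_pos: "poly D t > 0" for t by (simp add: D_def add_pos_nonneg)
  obtain g where g: "degree g \<le> 2 * d"
    "\<And>t. poly D t \<noteq> 0 \<Longrightarrow> poly g t = poly D t ^ d * eval2 f (fst (?P t)) (snd (?P t))"
    using eval2_rational_substitution[OF degree_quadratic_le degree_quadratic_le degree_quadratic_le f]
    unfolding D_def circle_param_rational by blast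
  have g_P: "poly g t = 0 \<longleftrightarrow> ?P t \<in> zero_set f" for t
    using g(2)[of t] D_pos[of t] by (simp add: zero_set_def case_prod_beta)
  have P_Q_S: "?P (?Q p) = p" if "p \<in> S" for p
    using that t0 S(3) by (intro P_Q) auto
  have inj: "inj_on ?Q S" by (rule inj_on_inverseI[of _ ?P]) (rule P_Q_S)
  have roots: "?Q ` S \<subseteq> {t. poly g t = 0}" using P_Q_S S(3) by (auto simp: g_P)
  have "g = 0"
  proof (rule ccontr)
    assume "g \<noteq> 0"
    have "card S = card (?Q ` S)" using inj by (simp add: card_image)
    also have "\<dots> \<le> card {t. poly g t = 0}" by (rule card_mono[OF poly_roots_finite[OF \<open>g \<noteq> 0\<close>] roots])
    also have "\<dots> \<le> degree g" by (rule card_poly_roots_bound[OF \<open>g \<noteq> 0\<close>])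
    finally show False using S(2) g(1) by simp
  qed
  then have "circle x0 y0 r - {antipode t0} \<subseteq> zero_set f" using P_Q g_P by (metis poly_0 subsetI)
  then show ?thesis by blast
qed

lemma irreducible_zero_set_inter_circle_bound:
  fixes f g :: bipoly
  assumes irr: "irreducible f" and g: "zero_set g = zero_set f" "total_degree g \<le> d"
    and not_circle: "\<not> is_circle (zero_set f)" and r: "r > 0"
  shows "finite (zero_set f \<inter> circle x0 y0 r) \<and> card (zero_set f \<inter> circle x0 y0 r) \<le> 2 * d"
proof (rule finite_if_finite_subsets_card_bdd, rule ccontr)
  fix S assume S: "S \<subseteq> zero_set f \<inter> circle x0 y0 r" "finite S" "\<not> card S \<le> 2 * d"
  obtain z where "circle x0 y0 r - {z} \<subseteq> zero_set f"
    using circle_minus_point_subset_zero_set[OF r g(2) S(2), of x0 y0] S g(1) by auto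
  then have "zero_set f = circle x0 y0 r" by (rule irreducible_zero_set_eq_circle[OF irr r])
  then show False using not_circle r by (auto simp: is_circle_iff)
qed

section \<open>Symmetries of the curve\<close>

definition proper_motion :: "real \<Rightarrow> real \<Rightarrow> real \<Rightarrow> real \<Rightarrow> (real \<times> real \<Rightarrow> real \<times> real) \<Rightarrow> bool" where
  "proper_motion a b e g T \<longleftrightarrow>
    a^2 + b^2 = 1 \<and> (\<forall>p. T p = (a * fst p - b * snd p + e, b * fst p + a * snd p + g))"

definition improper_motion :: "real \<Rightarrow> real \<Rightarrow> real \<Rightarrow> real \<Rightarrow> (real \<times> real \<Rightarrow> real \<times> real) \<Rightarrow> bool" where
  "improper_motion a b e g T \<longleftrightarrow>
    a^2 + b^2 = 1 \<and> (\<forall>p. T p = (a * fst p + b * snd p + e, b * fst p - a * snd p + g))"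

lemma proper_motion_apply:
  "proper_motion a b e g T \<Longrightarrow> T p = (a * fst p - b * snd p + e, b * fst p + a * snd p + g)"
  unfolding proper_motion_def by blast

lemma improper_motion_apply:
  "improper_motion a b e g T \<Longrightarrow> T p = (a * fst p + b * snd p + e, b * fst p - a * snd p + g)"
  unfolding improper_motion_def by blast

lemma isometry_sq_dist:
  assumes "isometry T"
  shows "(fst (T p) - fst (T q))^2 + (snd (T p) - snd (T q))^2 = (fst p - fst q)^2 + (snd p - snd q)^2"
proof -
  have "dist (T p) (T q) = dist p q" using assms unfolding isometry_def by blast
  then show ?thesis by (simp add: dist_prod_def dist_real_def)
qed

lemma isometry_affine_form:
  assumes T: "isometry T"
  obtains a b s e g where "a^2 + b^2 = 1" "s = 1 \<or> s = -1"
    "\<And>x y. T (x, y) = (a*x - s*b*y + e, b*x + s*a*y + g)"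
proof -
  define e g where "e = fst (T (0,0))" and "g = snd (T (0,0))"
  define a b where "a = fst (T (1,0)) - e" and "b = snd (T (1,0)) - g"
  define w1 w2 where "w1 = fst (T (0,1)) - e" and "w2 = snd (T (0,1)) - g"
  have ab: "a^2 + b^2 = 1" using isometry_sq_dist[OF T, of "(1,0)" "(0,0)"] by (simp add: a_def b_def e_def g_def)
  have w: "w1^2 + w2^2 = 1" using isometry_sq_dist[OF T, of "(0,1)" "(0,0)"] by (simp add: w1_def w2_def e_def g_def)
  have "(a - w1)^2 + (b - w2)^2 = 2" using isometry_sq_dist[OF T, of "(1,0)" "(0,1)"]
    by (simp add: a_def b_def w1_def w2_def)
  then have orth: "a * w1 + b * w2 = 0" using ab w by (simp add: power2_eq_square algebra_simps)
  define s where "s = a * w2 - b * w1"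
  have w1s: "w1 = - s * b" and w2s: "w2 = s * a" using orth ab unfolding s_def by algebra+
  have "s^2 * (a^2 + b^2) = 1" using w unfolding w1s w2s by (simp add: power2_eq_square algebra_simps)
  then have s: "s = 1 \<or> s = -1" using ab by (simp add: power2_eq_1_iff)
  have "T (x, y) = (a*x - s*b*y + e, b*x + s*a*y + g)" for x y
  proof -
    define P1 P2 where "P1 = fst (T (x,y)) - e" and "P2 = snd (T (x,y)) - g"
    have n: "P1^2 + P2^2 = x^2 + y^2"
      using isometry_sq_dist[OF T, of "(x,y)" "(0,0)"] by (simp add: P1_def P2_def e_def g_def)
    have "(P1 - a)^2 + (P2 - b)^2 = (x - 1)^2 + y^2"
      using isometry_sq_dist[OF T, of "(x,y)" "(1,0)"] by (simp add: P1_def P2_def a_def b_def)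
    then have dx: "P1 * a + P2 * b = x" using n ab by (simp add: power2_eq_square algebra_simps)
    have "(P1 - w1)^2 + (P2 - w2)^2 = x^2 + (y - 1)^2"
      using isometry_sq_dist[OF T, of "(x,y)" "(0,1)"] by (simp add: P1_def P2_def w1_def w2_def)
    then have "P1 * w1 + P2 * w2 = y" using n w by (simp add: power2_eq_square algebra_simps)
    then have "s * (P2 * a - P1 * b) = y" unfolding w1s w2s by (simp add: algebra_simps)
    then have dy: "P2 * a - P1 * b = s * y" using s by auto
    have "P1 = a * (P1 * a + P2 * b) - b * (P2 * a - P1 * b)" "P2 = b * (P1 * a + P2 * b) + a * (P2 * a - P1 * b)"
      using ab by algebra+
    then have "P1 = a * x - s * b * y" "P2 = b * x + s * a * y" unfolding dx dy by simp_all
    then show ?thesis unfolding P1_def P2_def by (simp add: prod_eq_iff)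
  qed
  with ab s that show ?thesis by blast
qed

lemma isometry_proper_or_improper:
  assumes "isometry T"
  shows "(\<exists>a b e g. proper_motion a b e g T) \<or> (\<exists>a b e g. improper_motion a b e g T)"
proof -
  obtain a b s e g where T: "a^2 + b^2 = 1" "s = 1 \<or> s = -1"
    "\<And>x y. T (x, y) = (a*x - s*b*y + e, b*x + s*a*y + g)"
    using isometry_affine_form[OF assms] by blast
  from T(2) show ?thesis
  proof
    assume "s = 1"
    then have "proper_motion a b e g T" using T by (auto simp: proper_motion_def)
    then show ?thesis by blast
  next
    assume "s = -1"
    then have "improper_motion a b e g T" using T by (auto simp: improper_motion_def)
    then show ?thesis by blast
  qed
qed

lemma id_in_symmetries: "id \<in> symmetries C"
  by (simp add: symmetries_def isometry_def)

lemma comp_in_symmetries: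
  assumes "T1 \<in> symmetries C" "T2 \<in> symmetries C"
  shows "T1 \<circ> T2 \<in> symmetries C"
proof -
  have T: "isometry T1" "isometry T2" "T1 ` C = C" "T2 ` C = C" using assms by (simp_all add: symmetries_def)
  then have "isometry (T1 \<circ> T2)" unfolding isometry_def comp_apply by metis
  moreover have "(T1 \<circ> T2) ` C = C" using T by (simp only: image_comp[symmetric])
  ultimately show ?thesis by (simp add: symmetries_def)
qed

lemma isometry_inj: "isometry T \<Longrightarrow> inj T"
  unfolding isometry_def inj_def by (metis dist_eq_0_iff)

definition translation_free :: "(real \<times> real) set \<Rightarrow> bool" where
  "translation_free C \<longleftrightarrow>
    (\<forall>T1 \<in> symmetries C. \<forall>T2 \<in> symmetries C. \<forall>v. (\<forall>p. T1 p = T2 p + v) \<longrightarrow> v = 0)"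

lemma translation_freeD:
  "translation_free C \<Longrightarrow> T1 \<in> symmetries C \<Longrightarrow> T2 \<in> symmetries C \<Longrightarrow> (\<And>p. T1 p = T2 p + v) \<Longrightarrow> v = 0"
  unfolding translation_free_def by blast

lemma translation_free_irreducible:
  fixes f :: bipoly
  assumes irr: "irreducible f" and inf: "infinite (zero_set f)" and not_line: "\<not> is_line (zero_set f)"
  shows "translation_free (zero_set f)"
  unfolding translation_free_def
proof (intro ballI allI impI)
  fix T1 T2 v assume T: "T1 \<in> symmetries (zero_set f)" "T2 \<in> symmetries (zero_set f)"
    and T1: "\<forall>p. T1 p = T2 p + v"
  show "v = 0"
  proof (rule ccontr)
    assume "v \<noteq> 0"
    have shift: "p + v \<in> zero_set f" if "p \<in> zero_set f" for p
    proof -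
      have "p \<in> T2 ` zero_set f" using T(2) that by (simp add: symmetries_def)
      then obtain q where "q \<in> zero_set f" "p = T2 q" by blast
      then show ?thesis using T(1) T1 by (auto simp: symmetries_def)
    qed
    obtain p where p: "p \<in> zero_set f" using inf by (metis finite.emptyI ex_in_conv)
    define orbit where "orbit n = p + real n *\<^sub>R v" for n
    have "orbit n \<in> zero_set f" for n
    proof (induction n)
      case 0
      then show ?case using p by (simp add: orbit_def)
    next
      case (Suc n)
      have "orbit (Suc n) = orbit n + v" by (simp add: orbit_def algebra_simps)
      then show ?case using shift[OF Suc] by simp
    qed
    moreover have "inj orbit" using \<open>v \<noteq> 0\<close> by (auto intro!: injI simp: orbit_def)
    then have "infinite (range orbit)" using finite_imageD infinite_UNIV_nat by blast
    moreover have "range orbit \<subseteq>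
        {(x, y). (- snd v) * x + fst v * y = (- snd v) * fst p + fst v * snd p}"
      unfolding image_subset_iff orbit_def by (simp add: case_prod_beta algebra_simps)
    moreover have "(- snd v, fst v) \<noteq> (0, 0)" using \<open>v \<noteq> 0\<close> by (auto simp: prod_eq_iff)
    ultimately have "zero_set f = {(x, y). (- snd v) * x + fst v * y = (- snd v) * fst p + fst v * snd p}"
      by (intro irreducible_zero_set_eq_line[OF irr]) auto
    then show False using not_line \<open>(- snd v, fst v) \<noteq> (0, 0)\<close> unfolding is_line_def by blast
  qed
qed

lemma proper_symmetries_commute:
  assumes C: "translation_free C" and T: "T1 \<in> symmetries C" "T2 \<in> symmetries C"
    and T1: "proper_motion a1 b1 e1 g1 T1" and T2: "proper_motion a2 b2 e2 g2 T2"
  shows "T1 \<circ> T2 = T2 \<circ> T1"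
proof -
  define v where "v = ((a1*e2 - b1*g2 + e1) - (a2*e1 - b2*g1 + e2), (b1*e2 + a1*g2 + g1) - (b2*e1 + a2*g1 + g2))"
  have "(T1 \<circ> T2) p = (T2 \<circ> T1) p + v" for p
    by (simp add: proper_motion_apply[OF T1] proper_motion_apply[OF T2] v_def algebra_simps)
  moreover have "T1 \<circ> T2 \<in> symmetries C" "T2 \<circ> T1 \<in> symmetries C" using T by (simp_all add: comp_in_symmetries)
  ultimately have "v = 0" using translation_freeD[OF C] by blast
  with \<open>(T1 \<circ> T2) _ = _\<close> show ?thesis by auto
qed

lemma proper_motion_unique_fixpoint:
  assumes T: "proper_motion a b e g T" and not_translation: "(a, b) \<noteq> (1, 0)"
  obtains c where "T c = c" "\<And>p. T p = p \<Longrightarrow> p = c"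
proof -
  define D where "D = (1 - a)^2 + b^2"
  have "D > 0" using not_translation by (auto simp: D_def sum_power2_gt_zero_iff)
  have T_fix_iff: "T p = p \<longleftrightarrow> (1 - a) * fst p + b * snd p = e \<and> - b * fst p + (1 - a) * snd p = g" for p
    by (auto simp: proper_motion_apply[OF T] prod_eq_iff algebra_simps)
  text \<open>Cramer's rule for this linear system of determinant \<open>D\<close>.\<close>
  define c where "c = (((1 - a) * e - b * g) / D, (b * e + (1 - a) * g) / D)"
  have "D * fst c = (1 - a) * e - b * g" "D * snd c = b * e + (1 - a) * g"
    using \<open>D > 0\<close> by (simp_all add: c_def)
  then have "D * ((1 - a) * fst c + b * snd c) = D * e" "D * (- b * fst c + (1 - a) * snd c) = D * g"
    unfolding D_def by algebra+
  then have "T c = c" unfolding T_fix_iff using \<open>D > 0\<close> by simp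
  moreover have "p = c" if "T p = p" for p
  proof -
    have fixed: "(1 - a) * fst p + b * snd p = e" "- b * fst p + (1 - a) * snd p = g"
      using that T_fix_iff by blast+
    have "D * fst p = (1 - a) * e - b * g" "D * snd p = b * e + (1 - a) * g"
      unfolding D_def fixed[symmetric] by (simp_all add: power2_eq_square algebra_simps)
    then show ?thesis using \<open>D > 0\<close> by (simp add: c_def prod_eq_iff field_simps)
  qed
  ultimately show ?thesis using that by blast
qed

lemma proper_motion_eq_if_agree:
  assumes T1: "proper_motion a1 b1 e1 g1 T1" and T2: "proper_motion a2 b2 e2 g2 T2"
    and fixed: "T1 c = c" "T2 c = c" and "p \<noteq> c" and agree: "T1 p = T2 p"
  shows "T1 = T2"
proof -
  have about_c: "T q = (fst c + a * (fst q - fst c) - b * (snd q - snd c),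
      snd c + b * (fst q - fst c) + a * (snd q - snd c))"
    if "proper_motion a b e g T" "T c = c" for a b e g T q
  proof -
    note T_eq = proper_motion_apply[OF that(1)]
    have "e = fst c - a * fst c + b * snd c" "g = snd c - b * fst c - a * snd c"
      using that(2) T_eq[of c] by (simp_all add: prod_eq_iff)
    then show ?thesis by (simp add: T_eq algebra_simps)
  qed
  define X Y where "X = fst p - fst c" and "Y = snd p - snd c"
  have "X \<noteq> 0 \<or> Y \<noteq> 0" using \<open>p \<noteq> c\<close> by (auto simp: X_def Y_def prod_eq_iff)
  have "a1 * X - b1 * Y = a2 * X - b2 * Y" "b1 * X + a1 * Y = b2 * X + a2 * Y"
    using agree about_c[OF T1 fixed(1), of p] about_c[OF T2 fixed(2), of p]
    by (simp_all add: X_def Y_def prod_eq_iff)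
  then have "((a1 - a2)^2 + (b1 - b2)^2) * X = 0" "((a1 - a2)^2 + (b1 - b2)^2) * Y = 0" by algebra+
  then have "a1 = a2" "b1 = b2" using \<open>X \<noteq> 0 \<or> Y \<noteq> 0\<close> by (auto simp: sum_power2_eq_zero_iff)
  then show ?thesis using about_c[OF T1 fixed(1)] about_c[OF T2 fixed(2)] by auto
qed

definition proper_symmetries :: "(real \<times> real) set \<Rightarrow> (real \<times> real \<Rightarrow> real \<times> real) set" where
  "proper_symmetries C = {T \<in> symmetries C. \<exists>a b e g. proper_motion a b e g T}"

definition improper_symmetries :: "(real \<times> real) set \<Rightarrow> (real \<times> real \<Rightarrow> real \<times> real) set" where
  "improper_symmetries C = {T \<in> symmetries C. \<exists>a b e g. improper_motion a b e g T}"

lemma symmetries_eq_proper_Un_improper: "symmetries C = proper_symmetries C \<union> improper_symmetries C"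
proof
  show "symmetries C \<subseteq> proper_symmetries C \<union> improper_symmetries C"
  proof
    fix T assume T: "T \<in> symmetries C"
    then have "isometry T" by (simp add: symmetries_def)
    from isometry_proper_or_improper[OF this] T
    show "T \<in> proper_symmetries C \<union> improper_symmetries C"
      by (auto simp: proper_symmetries_def improper_symmetries_def)
  qed
qed (auto simp: proper_symmetries_def improper_symmetries_def)

lemma proper_symmetries_common_fixpoint:
  assumes C: "translation_free C" and T0: "T0 \<in> proper_symmetries C" "T0 \<noteq> id"
  obtains c where "\<And>T. T \<in> proper_symmetries C \<Longrightarrow> T c = c"
proof -
  obtain a b e g where T0_sym: "T0 \<in> symmetries C" and T0_motion: "proper_motion a b e g T0"
    using T0(1) by (auto simp: proper_symmetries_def)
  have "(a, b) \<noteq> (1, 0)"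
  proof
    assume "(a, b) = (1, 0)"
    then have "T0 p = id p + (e, g)" for p by (simp add: proper_motion_apply[OF T0_motion] prod_eq_iff)
    then have "(e, g) = 0" by (rule translation_freeD[OF C T0_sym id_in_symmetries])
    then show False using T0(2) \<open>\<And>p. T0 p = id p + (e, g)\<close> by (auto simp: fun_eq_iff)
  qed
  then obtain c where c: "T0 c = c" "\<And>p. T0 p = p \<Longrightarrow> p = c"
    using proper_motion_unique_fixpoint[OF T0_motion] by blast
  have "T c = c" if T: "T \<in> proper_symmetries C" for T
  proof -
    obtain a' b' e' g' where "T \<in> symmetries C" "proper_motion a' b' e' g' T"
      using T by (auto simp: proper_symmetries_def)
    then have "T0 \<circ> T = T \<circ> T0" by (intro proper_symmetries_commute[OF C T0_sym _ T0_motion])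
    then have "T0 (T c) = T c" using c(1) by (metis comp_apply)
    then show ?thesis by (rule c(2))
  qed
  then show ?thesis using that by blast
qed

lemma card_proper_symmetries_le:
  assumes C: "translation_free C" "infinite C"
    and circle_bound: "\<And>x0 y0 r. r > 0 \<Longrightarrow> finite (C \<inter> circle x0 y0 r) \<and> card (C \<inter> circle x0 y0 r) \<le> 2 * d"
  shows "finite (proper_symmetries C) \<and> card (proper_symmetries C) \<le> 2 * d"
proof (cases "proper_symmetries C \<subseteq> {id}")
  case True
  obtain p where "p \<in> C" using infinite_imp_nonempty[OF C(2)] by blast
  then have "p \<in> C \<inter> circle (fst p - 1) (snd p) 1" by (auto simp: circle_def)
  moreover have "finite (C \<inter> circle (fst p - 1) (snd p) 1)" using circle_bound[of 1] by simp
  ultimately have "0 < card (C \<inter> circle (fst p - 1) (snd p) 1)" by (auto simp: card_gt_0_iff)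
  then have "1 \<le> 2 * d" using circle_bound[of 1 "fst p - 1" "snd p"] by linarith
  moreover have "finite (proper_symmetries C)" by (rule finite_subset[OF True]) simp
  moreover have "card (proper_symmetries C) \<le> 1" using card_mono[OF _ True] by simp
  ultimately show ?thesis by simp
next
  case False
  then obtain T0 where "T0 \<in> proper_symmetries C" "T0 \<noteq> id" by blast
  then obtain c where fixed: "\<And>T. T \<in> proper_symmetries C \<Longrightarrow> T c = c"
    using proper_symmetries_common_fixpoint[OF C(1)] by blast
  have "infinite (C - {c})" using C(2) by simp
  then obtain p where p: "p \<in> C" "p \<noteq> c" using infinite_imp_nonempty by blast
  define r where "r = sqrt ((fst p - fst c)^2 + (snd p - snd c)^2)"
  have "r > 0" using p(2) by (auto simp: r_def prod_eq_iff sum_power2_gt_zero_iff)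
  let ?orbit = "(\<lambda>T. T p) ` proper_symmetries C"
  have inj: "inj_on (\<lambda>T. T p) (proper_symmetries C)"
  proof (rule inj_onI)
    fix T T' assume T: "T \<in> proper_symmetries C" "T' \<in> proper_symmetries C" and "T p = T' p"
    then obtain a b e g a' b' e' g' where "proper_motion a b e g T" "proper_motion a' b' e' g' T'"
      by (auto simp: proper_symmetries_def)
    then show "T = T'" using proper_motion_eq_if_agree fixed[OF T(1)] fixed[OF T(2)] p(2) \<open>T p = T' p\<close>
      by blast
  qed
  have orbit: "?orbit \<subseteq> C \<inter> circle (fst c) (snd c) r"
  proof (rule image_subsetI)
    fix T assume T: "T \<in> proper_symmetries C"
    then have "isometry T" "T ` C = C" by (auto simp: proper_symmetries_def symmetries_def)
    then show "T p \<in> C \<inter> circle (fst c) (snd c) r"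
      using isometry_sq_dist[of T p c] fixed[OF T] p(1) by (auto simp: circle_def r_def case_prod_beta)
  qed
  have bound: "finite (C \<inter> circle (fst c) (snd c) r)" "card (C \<inter> circle (fst c) (snd c) r) \<le> 2 * d"
    using circle_bound[OF \<open>r > 0\<close>] by auto
  have "card (proper_symmetries C) = card ?orbit" by (rule card_image[OF inj, symmetric])
  also have "\<dots> \<le> card (C \<inter> circle (fst c) (snd c) r)" by (rule card_mono[OF bound(1) orbit])
  also have "\<dots> \<le> 2 * d" by (rule bound(2))
  finally show ?thesis using finite_imageD[OF finite_subset[OF orbit bound(1)] inj] by simp
qed

lemma card_improper_symmetries_le:
  assumes "finite (proper_symmetries C)"
  shows "finite (improper_symmetries C) \<and> card (improper_symmetries C) \<le> card (proper_symmetries C)"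
proof (cases "improper_symmetries C = {}")
  case False
  then obtain \<sigma> a0 b0 e0 g0 where \<sigma>: "\<sigma> \<in> symmetries C" "improper_motion a0 b0 e0 g0 \<sigma>"
    by (auto simp: improper_symmetries_def)
  have "(\<lambda>T. \<sigma> \<circ> T) ` improper_symmetries C \<subseteq> proper_symmetries C"
  proof clarify
    fix T assume "T \<in> improper_symmetries C"
    then obtain a b e g where T: "T \<in> symmetries C" "improper_motion a b e g T"
      by (auto simp: improper_symmetries_def)
    have "(a0*a + b0*b)^2 + (b0*a - a0*b)^2 = (a0^2 + b0^2) * (a^2 + b^2)" by algebra
    also have "\<dots> = 1" using \<sigma>(2) T(2) by (simp add: improper_motion_def)
    finally have "proper_motion (a0*a + b0*b) (b0*a - a0*b) (a0*e + b0*g + e0) (b0*e - a0*g + g0) (\<sigma> \<circ> T)"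
      unfolding proper_motion_def
      by (simp add: improper_motion_apply[OF \<sigma>(2)] improper_motion_apply[OF T(2)] algebra_simps)
    then show "\<sigma> \<circ> T \<in> proper_symmetries C"
      using comp_in_symmetries[OF \<sigma>(1) T(1)] by (auto simp: proper_symmetries_def)
  qed
  moreover have "inj_on (\<lambda>T. \<sigma> \<circ> T) (improper_symmetries C)"
  proof (rule inj_onI)
    fix T T' assume "\<sigma> \<circ> T = \<sigma> \<circ> T'"
    moreover have "inj \<sigma>" using isometry_inj \<sigma>(1) by (simp add: symmetries_def)
    ultimately show "T = T'" by (simp add: fun_eq_iff inj_eq)
  qed
  ultimately show ?thesis
    using assms card_image card_mono finite_imageD finite_subset by metis
qed simp

theorem lemma2p6:
  fixes C :: "(real \<times> real) set" and d :: nat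
  assumes "plane_curve C" and "irreducible_curve C" and "curve_degree C = d"
    and "\<not> is_line C" and "\<not> is_circle C"
  shows "finite (symmetries C) \<and> card (symmetries C) \<le> 4 * d"
proof -
  obtain f where irr: "irreducible f" and C: "C = zero_set f"
    using assms(2) unfolding irreducible_curve_def by metis
  have "infinite C" using assms(1) unfolding plane_curve_def by blast
  have "\<exists>d f. f \<noteq> 0 \<and> zero_set f = C \<and> total_degree f = d"
    using assms(1) unfolding plane_curve_def by blast
  from LeastI_ex[OF this] obtain f0 where f0: "zero_set f0 = C" "total_degree f0 = d"
    using assms(3) unfolding curve_degree_def by blast
  have translation_free: "translation_free C"
    using translation_free_irreducible[OF irr] \<open>infinite C\<close> assms(4) C by simp
  have "zero_set f0 = zero_set f" "total_degree f0 \<le> d" "\<not> is_circle (zero_set f)"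
    using f0 C assms(5) by simp_all
  then have circle_bound: "finite (C \<inter> circle x0 y0 r) \<and> card (C \<inter> circle x0 y0 r) \<le> 2 * d"
    if "r > 0" for x0 y0 r
    using irreducible_zero_set_inter_circle_bound[OF irr _ _ _ that] C by simp
  have proper: "finite (proper_symmetries C) \<and> card (proper_symmetries C) \<le> 2 * d"
    using card_proper_symmetries_le[OF translation_free \<open>infinite C\<close> circle_bound] .
  then have "finite (improper_symmetries C) \<and> card (improper_symmetries C) \<le> 2 * d"
    using card_improper_symmetries_le by fastforce
  with proper show ?thesis
    unfolding symmetries_eq_proper_Un_improper
    using card_Un_le[of "proper_symmetries C" "improper_symmetries C"] by simp
qed

end
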